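(* Let $X$ be a separable metrizable space and $A\subsetneq X$ a proper subset. Then $\mathcal{M}(A)$ is of type $Z$ in $\mathcal{M}(X)$. More precisely, for $a\in X\setminus A$, the maps $\Phi_n\colon\mathcal{M}(X)\to\mathcal{M}(X)$, $\Phi_n(u)=a$ on $[0,1/n)$ and $\Phi_n(u)=u$ on $[1/n,1]$, have images disjoint from $\mathcal{M}(A)$ and converge to $\mathrm{id}_{\mathcal{M}(X)}$ uniformly on compact subsets of $\mathcal{M}(X)$. Moreover, $\overline{\mathcal{M}(A)}=\mathcal{M}(\overline{A})$.
   Context: For a separable metrizable space $X$, $\mathcal{M}(X)$ is the space of equivalence classes (modulo equality Lebesgue-a.e. on $[0,1]$) of Lebesgue measurable functions $u\colon[0,1]\to X$, topologized by the metric $(u,w)\mapsto\int_0^1 d(u(t),w(t))\,dt$ for any compatible bounded metric $d$ on $X$. For $A\subset X$, $\mathcal{M}(A)$ is the subset of $\mathcal{M}(X)$ of classes with a representative with values in $A$. A subset $B$ of a metric space $Z$ is of type $Z$ if the continuous maps from the Hilbert cube $Q$ into $Z\setminus B$ are dense in $\mathcal{C}(Q,Z)$ in the topology of uniform convergence. *)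

theory Defs
  imports "HOL-Analysis.Analysis"
begin

text \<open>Representatives of elements of M(X): Lebesgue measurable maps [0,1] -> X.
  Two representatives are identified iff they agree a.e.; we work with the
  pseudo-metric on representatives (its metric quotient is M(X)).\<close>

definition Meas :: "(real \<Rightarrow> 'a::topological_space) set" where
  "Meas = {u. u \<in> borel_measurable (lebesgue_on {0..1})}"

text \<open>The metric of M(X), using the compatible bounded metric min(dist,1) on X.\<close>
definition dist_M :: "(real \<Rightarrow> 'a::metric_space) \<Rightarrow> (real \<Rightarrow> 'a) \<Rightarrow> real" where
  "dist_M u w = integral\<^sup>L (lebesgue_on {0..1}) (\<lambda>t. min (dist (u t) (w t)) 1)"

definition MA :: "'a::topological_space set \<Rightarrow> (real \<Rightarrow> 'a) set" where
  "MA A = {u \<in> Meas. \<exists>v \<in> Meas. (\<forall>t\<in>{0..1}. v t \<in> A) \<and>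
                          (AE t in lebesgue_on {0..1}. u t = v t)}"

definition mopen :: "(real \<Rightarrow> 'a::metric_space) set \<Rightarrow> bool" where
  "mopen U \<longleftrightarrow> U \<subseteq> Meas \<and> (\<forall>u\<in>U. \<exists>e>0. \<forall>w\<in>Meas. dist_M u w < e \<longrightarrow> w \<in> U)"

lemma istopology_mopen: "istopology mopen"
  unfolding istopology_def mopen_def
proof (intro conjI allI impI)
  fix S T :: "(real \<Rightarrow> 'a) set"
  assume S: "S \<subseteq> Meas \<and> (\<forall>u\<in>S. \<exists>e>0. \<forall>w\<in>Meas. dist_M u w < e \<longrightarrow> w \<in> S)"
     and T: "T \<subseteq> Meas \<and> (\<forall>u\<in>T. \<exists>e>0. \<forall>w\<in>Meas. dist_M u w < e \<longrightarrow> w \<in> T)"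
  show "S \<inter> T \<subseteq> Meas" using S by blast
  show "\<forall>u\<in>S \<inter> T. \<exists>e>0. \<forall>w\<in>Meas. dist_M u w < e \<longrightarrow> w \<in> S \<inter> T"
  proof
    fix u assume "u \<in> S \<inter> T"
    then obtain e1 e2 where "e1 > 0" "\<forall>w\<in>Meas. dist_M u w < e1 \<longrightarrow> w \<in> S"
      "e2 > 0" "\<forall>w\<in>Meas. dist_M u w < e2 \<longrightarrow> w \<in> T" using S T by blast
    then show "\<exists>e>0. \<forall>w\<in>Meas. dist_M u w < e \<longrightarrow> w \<in> S \<inter> T"
      by (intro exI[of _ "min e1 e2"]) auto
  qed
next
  fix K :: "(real \<Rightarrow> 'a) set set"
  assume K: "\<forall>S\<in>K. S \<subseteq> Meas \<and> (\<forall>u\<in>S. \<exists>e>0. \<forall>w\<in>Meas. dist_M u w < e \<longrightarrow> w \<in> S)"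
  show "\<Union>K \<subseteq> Meas" using K by blast
  show "\<forall>u\<in>\<Union>K. \<exists>e>0. \<forall>w\<in>Meas. dist_M u w < e \<longrightarrow> w \<in> \<Union>K"
    using K by (meson UnionE UnionI)
qed

definition mtop :: "(real \<Rightarrow> 'a::metric_space) topology" where
  "mtop = topology mopen"

definition hilbert_cube :: "(nat \<Rightarrow> real) set" where
  "hilbert_cube = {q. \<forall>n. q n \<in> {0..1}}"

definition type_Z :: "(real \<Rightarrow> 'a::metric_space) set \<Rightarrow> bool" where
  "type_Z B \<longleftrightarrow>
     (\<forall>f. continuous_map (top_of_set hilbert_cube) mtop f \<longrightarrow>
        (\<forall>e>0. \<exists>g. continuous_map (top_of_set hilbert_cube) mtop g \<and>
                    g ` hilbert_cube \<inter> B = {} \<and>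
                    (\<forall>q\<in>hilbert_cube. dist_M (f q) (g q) < e)))"

definition Phi :: "nat \<Rightarrow> 'a \<Rightarrow> (real \<Rightarrow> 'a) \<Rightarrow> (real \<Rightarrow> 'a)" where
  "Phi n a u = (\<lambda>t. if t < 1 / real n then a else u t)"

end

theory Submission
  imports Defs
begin

text \<open>
  (1) \<open>dist_M\<close> is a pseudo-metric that only sees a.e.-classes; the topology \<open>mtop\<close>
      is its ball topology, so maps not increasing \<open>dist_M\<close> are continuous.
  (2) For \<open>a \<notin> A\<close>, the map \<open>Phi n a\<close> (constant \<open>a\<close> on [0,1/n)) is non-expansive,
      moves every point by at most \<open>1/n\<close>, and its values are not a.e. in \<open>A\<close>
      because [0,1/n) has positive measure.  Hence \<open>Phi n a \<circ> f\<close> approximates any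
      map \<open>f\<close> from the Hilbert cube uniformly while avoiding \<open>M(A)\<close>: \<open>M(A)\<close> is of
      type Z, and \<open>Phi n a \<rightarrow> id\<close> uniformly (on compacta in particular).
  (3) \<open>closure M(A) \<subseteq> M(closure A)\<close>: if \<open>dist_M u (w k)\<close> is summable then
      \<open>w k \<rightarrow> u\<close> a.e. (the sum of the truncated distances has finite integral), so
      \<open>u\<close> is an a.e.-limit of \<open>A\<close>-valued maps and lies a.e. in \<open>closure A\<close>.
  (4) \<open>M(closure A) \<subseteq> closure M(A)\<close>: round a \<open>closure A\<close>-valued map to the first
      point of a countable dense subset of \<open>A\<close> within distance \<open>\<delta>\<close>; this is
      measurable and \<open>\<delta>\<close>-close in \<open>dist_M\<close>.
\<close>

abbreviation L01 :: "real measure" where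
  "L01 \<equiv> lebesgue_on {0..1}"

lemma finite_measure_L01: "finite_measure L01"
  by (simp add: finite_measure_lebesgue_on)

lemma measure_space_L01: "measure L01 {0..1} = 1"
  by (subst measure_restrict_space) auto

lemma initial_segment_L01:
  assumes "0 \<le> c" "c \<le> 1"
  shows "{0..<c} \<in> sets L01" "emeasure L01 {0..<c} = ennreal c" "measure L01 {0..<c} = c"
proof -
  have sub: "{0..<c} \<subseteq> {0..1::real}" using assms by auto
  show "{0..<c} \<in> sets L01"
    using sub by (subst sets_restrict_space_iff) auto
  show "emeasure L01 {0..<c} = ennreal c"
    by (subst emeasure_restrict_space) (use sub assms in auto)
  show "measure L01 {0..<c} = c"
    by (subst measure_restrict_space) (use sub assms in auto)
qed

section \<open>The pseudo-metric of M(X)\<close>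

lemma truncated_dist_measurable:
  fixes u w :: "real \<Rightarrow> 'a::{metric_space, second_countable_topology}"
  assumes "u \<in> Meas" "w \<in> Meas"
  shows "(\<lambda>t. min (dist (u t) (w t)) 1) \<in> borel_measurable L01"
proof -
  have [measurable]: "u \<in> borel_measurable L01" "w \<in> borel_measurable L01"
    using assms by (auto simp: Meas_def)
  show ?thesis by measurable
qed

lemma truncated_dist_integrable:
  fixes u w :: "real \<Rightarrow> 'a::{metric_space, second_countable_topology}"
  assumes "u \<in> Meas" "w \<in> Meas"
  shows "integrable L01 (\<lambda>t. min (dist (u t) (w t)) 1)"
  by (rule finite_measure.integrable_const_bound[OF finite_measure_L01, where B=1])
     (auto intro: truncated_dist_measurable[OF assms])

lemma dist_M_nonneg: "0 \<le> dist_M u w"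
  unfolding dist_M_def by (rule Bochner_Integration.integral_nonneg) simp

lemma dist_M_self: "dist_M u u = 0"
  unfolding dist_M_def by simp

lemma dist_M_sym: "dist_M u w = dist_M w u"
  unfolding dist_M_def by (simp add: dist_commute)

lemma dist_M_le_integral:
  fixes u w :: "real \<Rightarrow> 'a::{metric_space, second_countable_topology}"
  assumes "u \<in> Meas" "w \<in> Meas" "integrable L01 g"
    and "\<And>t. t \<in> {0..1} \<Longrightarrow> min (dist (u t) (w t)) 1 \<le> g t"
  shows "dist_M u w \<le> integral\<^sup>L L01 g"
  unfolding dist_M_def
  using truncated_dist_integrable[OF assms(1,2)] assms(3) assms(4)
  by (rule integral_mono) simp

lemma min_one_triangle:
  fixes x y z :: real
  assumes "x \<le> y + z" "0 \<le> y" "0 \<le> z"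
  shows "min x 1 \<le> min y 1 + min z 1"
  using assms by (cases "x \<le> 1"; cases "y \<le> 1"; cases "z \<le> 1") (simp_all add: min_def)

lemma dist_M_triangle:
  fixes u v w :: "real \<Rightarrow> 'a::{metric_space, second_countable_topology}"
  assumes "u \<in> Meas" "v \<in> Meas" "w \<in> Meas"
  shows "dist_M u w \<le> dist_M u v + dist_M v w"
proof -
  let ?d = "\<lambda>x y. min (dist x y) (1::real)"
  have pointwise: "?d (u t) (w t) \<le> ?d (u t) (v t) + ?d (v t) (w t)" for t
    by (rule min_one_triangle[OF dist_triangle[of "u t" "w t" "v t"] zero_le_dist zero_le_dist])
  have "dist_M u w \<le> integral\<^sup>L L01 (\<lambda>t. ?d (u t) (v t) + ?d (v t) (w t))"
  proof (rule dist_M_le_integral[OF assms(1,3)])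
    show "integrable L01 (\<lambda>t. ?d (u t) (v t) + ?d (v t) (w t))"
      using truncated_dist_integrable[OF assms(1,2)] truncated_dist_integrable[OF assms(2,3)]
      by (rule Bochner_Integration.integrable_add)
  qed (rule pointwise)
  also have "\<dots> = dist_M u v + dist_M v w"
    unfolding dist_M_def
    using truncated_dist_integrable[OF assms(1,2)] truncated_dist_integrable[OF assms(2,3)]
    by (rule Bochner_Integration.integral_add)
  finally show ?thesis .
qed

lemma dist_M_AE_cong:
  fixes u y v :: "real \<Rightarrow> 'a::{metric_space, second_countable_topology}"
  assumes "u \<in> Meas" "y \<in> Meas" "v \<in> Meas" "AE t in L01. y t = v t"
  shows "dist_M u y = dist_M u v"
  unfolding dist_M_def
  by (rule integral_cong_AE[OF truncated_dist_measurable[OF assms(1,2)]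
        truncated_dist_measurable[OF assms(1,3)]])
     (rule AE_mp[OF assms(4)], rule AE_I2, simp)

section \<open>The topology of M(X)\<close>

lemma openin_mtop: "openin mtop = mopen"
  unfolding mtop_def by (simp add: istopology_mopen)

lemma topspace_mtop: "topspace mtop = Meas"
proof -
  have "mopen (Meas :: (real \<Rightarrow> 'a) set)" unfolding mopen_def using zero_less_one by blast
  then show ?thesis
    unfolding topspace_def openin_mtop by (auto simp: mopen_def) (use zero_less_one in blast)
qed

lemma mopen_ball:
  fixes u :: "real \<Rightarrow> 'a::{metric_space, second_countable_topology}"
  assumes "u \<in> Meas"
  shows "mopen {w\<in>Meas. dist_M u w < e}"
  unfolding mopen_def
proof safe
  fix w assume w: "w \<in> Meas" "dist_M u w < e"
  show "\<exists>e'>0. \<forall>w'\<in>Meas. dist_M w w' < e' \<longrightarrow> w' \<in> {w \<in> Meas. dist_M u w < e}"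
  proof (intro exI[of _ "e - dist_M u w"] conjI ballI impI)
    fix w' assume "w' \<in> Meas" "dist_M w w' < e - dist_M u w"
    then show "w' \<in> {w \<in> Meas. dist_M u w < e}"
      using dist_M_triangle[OF assms w(1) \<open>w' \<in> Meas\<close>] by auto
  qed (use w in auto)
qed

lemma MA_subset_Meas: "MA A \<subseteq> Meas"
  unfolding MA_def by (rule Collect_subset)

lemma in_mtop_closure_of:
  fixes S :: "(real \<Rightarrow> 'a::{metric_space, second_countable_topology}) set"
  assumes "S \<subseteq> Meas"
  shows "u \<in> mtop closure_of S \<longleftrightarrow> u \<in> Meas \<and> (\<forall>e>0. \<exists>w\<in>S. dist_M u w < e)"
    (is "_ \<longleftrightarrow> u \<in> Meas \<and> ?near")
proof -
  have "(\<forall>T. u \<in> T \<and> mopen T \<longrightarrow> (\<exists>y. y \<in> S \<and> y \<in> T)) \<longleftrightarrow> ?near" if uM: "u \<in> Meas"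
  proof
    assume hit: "\<forall>T. u \<in> T \<and> mopen T \<longrightarrow> (\<exists>y. y \<in> S \<and> y \<in> T)"
    show ?near
    proof (intro allI impI)
      fix e :: real assume "e > 0"
      then have "u \<in> {w\<in>Meas. dist_M u w < e} \<and> mopen {w\<in>Meas. dist_M u w < e}"
        using uM mopen_ball[OF uM, of e] by (simp add: dist_M_self)
      then have "\<exists>y. y \<in> S \<and> y \<in> {w\<in>Meas. dist_M u w < e}"
        by (rule mp[OF spec[OF hit]])
      then show "\<exists>w\<in>S. dist_M u w < e" by blast
    qed
  next
    assume near: ?near
    show "\<forall>T. u \<in> T \<and> mopen T \<longrightarrow> (\<exists>y. y \<in> S \<and> y \<in> T)"
    proof (intro allI impI)
      fix T assume "u \<in> T \<and> mopen T"
      then obtain e where "e > 0" and ball: "\<forall>w\<in>Meas. dist_M u w < e \<longrightarrow> w \<in> T"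
        unfolding mopen_def by blast
      then obtain w where "w \<in> S" "dist_M u w < e" using near by blast
      then show "\<exists>y. y \<in> S \<and> y \<in> T" using ball assms by blast
    qed
  qed
  then show ?thesis unfolding in_closure_of openin_mtop topspace_mtop by blast
qed

lemma nonexpansive_continuous_map:
  fixes h :: "(real \<Rightarrow> 'a::{metric_space, second_countable_topology}) \<Rightarrow> (real \<Rightarrow> 'a)"
  assumes "\<And>u. u \<in> Meas \<Longrightarrow> h u \<in> Meas"
    and "\<And>u w. u \<in> Meas \<Longrightarrow> w \<in> Meas \<Longrightarrow> dist_M (h u) (h w) \<le> dist_M u w"
  shows "continuous_map mtop mtop h"
  unfolding continuous_map openin_mtop topspace_mtop
proof (intro conjI allI impI)
  show "h ` Meas \<subseteq> Meas" using assms(1) by auto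
  fix U :: "(real \<Rightarrow> 'a) set" assume U: "mopen U"
  show "mopen {x \<in> Meas. h x \<in> U}"
    unfolding mopen_def
  proof safe
    fix u assume u: "u \<in> Meas" "h u \<in> U"
    then obtain e where e: "e > 0" "\<forall>w\<in>Meas. dist_M (h u) w < e \<longrightarrow> w \<in> U"
      using U unfolding mopen_def by blast
    have "h w \<in> U" if "w \<in> Meas" "dist_M u w < e" for w
    proof -
      have "dist_M (h u) (h w) < e" using assms(2)[OF u(1) that(1)] that(2) by linarith
      then show ?thesis using e(2) assms(1)[OF that(1)] by blast
    qed
    with e(1) show "\<exists>e>0. \<forall>w\<in>Meas. dist_M u w < e \<longrightarrow> w \<in> {x \<in> Meas. h x \<in> U}"
      by blast
  qed
qed

lemma type_Z_if_uniform_avoiding_maps: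
  fixes B :: "(real \<Rightarrow> 'a::{metric_space, second_countable_topology}) set"
  assumes "\<And>e. e > 0 \<Longrightarrow> \<exists>h. continuous_map mtop mtop h \<and> h ` Meas \<inter> B = {} \<and>
                               (\<forall>u\<in>Meas. dist_M u (h u) < e)"
  shows "type_Z B"
  unfolding type_Z_def
proof (intro allI impI)
  fix f :: "(nat \<Rightarrow> real) \<Rightarrow> real \<Rightarrow> 'a" and e :: real
  assume f: "continuous_map (top_of_set hilbert_cube) mtop f" and "e > 0"
  then obtain h where h: "continuous_map mtop mtop h" "h ` Meas \<inter> B = {}"
    "\<forall>u\<in>Meas. dist_M u (h u) < e" using assms by blast
  have fM: "f q \<in> Meas" if "q \<in> hilbert_cube" for q
    using continuous_map_image_subset_topspace[OF f] that topspace_mtop by auto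
  show "\<exists>g. continuous_map (top_of_set hilbert_cube) mtop g \<and> g ` hilbert_cube \<inter> B = {} \<and>
             (\<forall>q\<in>hilbert_cube. dist_M (f q) (g q) < e)"
  proof (intro exI[of _ "h \<circ> f"] conjI ballI)
    show "continuous_map (top_of_set hilbert_cube) mtop (h \<circ> f)"
      using continuous_map_compose[OF f h(1)] .
    show "(h \<circ> f) ` hilbert_cube \<inter> B = {}" using h(2) fM by auto
    show "dist_M (f q) ((h \<circ> f) q) < e" if "q \<in> hilbert_cube" for q
      using h(3) fM[OF that] by simp
  qed
qed

section \<open>The maps Phi\<close>

lemma Phi_Meas:
  fixes u :: "real \<Rightarrow> 'a::{metric_space, second_countable_topology}"
  assumes "u \<in> Meas"
  shows "Phi n a u \<in> Meas"
proof -
  have [measurable]: "u \<in> borel_measurable L01" using assms by (auto simp: Meas_def)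
  have [measurable]: "(\<lambda>t::real. t) \<in> borel_measurable L01"
    by (rule measurable_restrict_space1) (simp add: measurable_completion)
  have "(\<lambda>t. if t < 1 / real n then a else u t) \<in> borel_measurable L01" by measurable
  then show ?thesis unfolding Meas_def Phi_def by simp
qed

lemma Phi_nonexpansive:
  fixes u w :: "real \<Rightarrow> 'a::{metric_space, second_countable_topology}"
  assumes "u \<in> Meas" "w \<in> Meas"
  shows "dist_M (Phi n a u) (Phi n a w) \<le> dist_M u w"
  unfolding dist_M_def
  by (rule integral_mono[OF truncated_dist_integrable[OF Phi_Meas[OF assms(1)] Phi_Meas[OF assms(2)]]
        truncated_dist_integrable[OF assms]])
     (auto simp: Phi_def)

text \<open>\<open>Phi n a\<close> changes a map only on [0,1/n), so it moves it by at most \<open>1/n\<close>.\<close>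

lemma Phi_close:
  fixes u :: "real \<Rightarrow> 'a::{metric_space, second_countable_topology}"
  assumes "u \<in> Meas"
  shows "dist_M (Phi n a u) u \<le> 1 / real n"
proof -
  have c: "0 \<le> 1 / real n" "1 / real n \<le> 1" by (auto simp: divide_le_eq_1)
  have "integrable L01 (indicator {0..<1/real n} :: real \<Rightarrow> real)"
    by (rule finite_measure.integrable_const_bound[OF finite_measure_L01, where B=1])
       (auto intro: borel_measurable_indicator initial_segment_L01(1)[OF c])
  then have "dist_M (Phi n a u) u \<le> integral\<^sup>L L01 (indicator {0..<1/real n})"
    by (rule dist_M_le_integral[OF Phi_Meas[OF assms] assms]) (auto simp: Phi_def indicator_def)
  also have "\<dots> = 1 / real n"
    using initial_segment_L01[OF c] c by (simp add: Int_absorb2 subset_iff)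
  finally show ?thesis .
qed

text \<open>For \<open>a \<notin> A\<close>, \<open>Phi n a u\<close> takes the value \<open>a\<close> on a set of positive measure,
  so it has no \<open>A\<close>-valued representative.\<close>

lemma Phi_notin_MA:
  fixes u :: "real \<Rightarrow> 'a::{metric_space, second_countable_topology}"
  assumes "n \<ge> 1" "a \<notin> A"
  shows "Phi n a u \<notin> MA A"
proof
  assume "Phi n a u \<in> MA A"
  then obtain v where v: "\<forall>t\<in>{0..1}. v t \<in> A" "AE t in L01. Phi n a u t = v t"
    unfolding MA_def by blast
  have c: "0 \<le> 1 / real n" "1 / real n \<le> 1" by (auto simp: divide_le_eq_1)
  have "AE t in L01. t \<notin> {0..<1/real n}"
    using AE_space v(2)
  proof eventually_elim
    case (elim t)
    show ?case
    proof
      assume "t \<in> {0..<1/real n}"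
      then have "v t = a" using elim(2) by (simp add: Phi_def)
      moreover have "v t \<in> A" using v(1) elim(1) by simp
      ultimately show False using assms(2) by simp
    qed
  qed
  moreover have "{t \<in> space L01. \<not> t \<notin> {0..<1/real n}} = {0..<1/real n}"
    using c by auto
  ultimately have "emeasure L01 {0..<1/real n} = 0"
    using AE_iff_measurable[OF initial_segment_L01(1)[OF c], of "\<lambda>t. t \<notin> {0..<1/real n}"]
    by blast
  then show False using initial_segment_L01(2)[OF c] assms(1) by simp
qed

section \<open>Closure of M(A)\<close>

text \<open>If \<open>dist_M u (w k)\<close> is dominated by a summable sequence, then \<open>w k \<rightarrow> u\<close> almost
  everywhere: the truncated distances have integrable (hence a.e. finite) sum.\<close>

lemma AE_tendsto_if_dist_M_summable:
  fixes u :: "real \<Rightarrow> 'a::{metric_space, second_countable_topology}"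
  assumes u: "u \<in> Meas" and w: "\<And>k. w k \<in> Meas"
    and d: "\<And>k. dist_M u (w k) \<le> d k" "summable d"
  shows "AE t in L01. (\<lambda>k. w k t) \<longlonglongrightarrow> u t"
proof -
  define f where "f k t = min (dist (u t) (w k t)) 1" for k t
  have [measurable]: "f k \<in> borel_measurable L01" for k
    unfolding f_def using truncated_dist_measurable[OF u w] .
  have f0: "0 \<le> f k t" for k t unfolding f_def by simp
  have d0: "0 \<le> d k" for k using d(1) dist_M_nonneg order_trans by blast
  have "(\<integral>\<^sup>+ t. (\<Sum>k. ennreal (f k t)) \<partial>L01) = (\<Sum>k. \<integral>\<^sup>+ t. ennreal (f k t) \<partial>L01)"
    by (rule nn_integral_suminf) measurable
  also have "\<dots> = (\<Sum>k. ennreal (dist_M u (w k)))"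
    unfolding dist_M_def f_def
    by (intro suminf_cong nn_integral_eq_integral truncated_dist_integrable[OF u w]) simp
  also have "\<dots> \<le> (\<Sum>k. ennreal (d k))"
    by (intro suminf_le ennreal_leI d(1)) auto
  also have "\<dots> = ennreal (\<Sum>k. d k)"
    by (rule suminf_ennreal2[OF d0 d(2)])
  finally have "(\<integral>\<^sup>+ t. (\<Sum>k. ennreal (f k t)) \<partial>L01) \<noteq> \<infinity>"
    by (auto simp: top_unique)
  then have "AE t in L01. (\<Sum>k. ennreal (f k t)) \<noteq> \<infinity>"
    by (intro nn_integral_PInf_AE) measurable
  then show ?thesis
  proof eventually_elim
    case (elim t)
    then have "summable (\<lambda>k. f k t)"
      using summable_suminf_not_top f0 by (metis infinity_ennreal_def)
    then have lim: "(\<lambda>k. f k t) \<longlonglongrightarrow> 0" by (rule summable_LIMSEQ_zero)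
    show ?case
    proof (rule tendstoI)
      fix e :: real assume "e > 0"
      then have "\<forall>\<^sub>F k in sequentially. f k t < min e 1"
        using tendstoD[OF lim, of "min e 1"] f0 by simp
      then show "\<forall>\<^sub>F k in sequentially. dist (w k t) (u t) < e"
        by eventually_elim (auto simp: f_def dist_commute split: if_splits)
    qed
  qed
qed

text \<open>A measurable map that lies a.e. in a nonempty set \<open>C\<close> has a \<open>C\<close>-valued
  representative: redefine it on a null set.\<close>

lemma MA_if_AE:
  fixes u :: "real \<Rightarrow> 'a::{metric_space, second_countable_topology}"
  assumes u: "u \<in> Meas" and "c \<in> C" and "AE t in L01. u t \<in> C"
  shows "u \<in> MA C"
proof -
  obtain N where N: "{t \<in> {0..1}. u t \<notin> C} \<subseteq> N" "emeasure L01 N = 0" "N \<in> sets L01"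
    using assms(3) by (auto elim: AE_E)
  define v where "v t = (if t \<in> N then c else u t)" for t
  have [measurable]: "u \<in> borel_measurable L01" using u by (simp add: Meas_def)
  have "v \<in> Meas" unfolding Meas_def v_def
    by (simp, rule measurable_If_set) (use N(3) sets.sets_into_space in \<open>auto simp: Int_absorb2\<close>)
  moreover have "\<forall>t\<in>{0..1}. v t \<in> C" using N(1) \<open>c \<in> C\<close> by (auto simp: v_def)
  moreover have "N \<in> null_sets L01" using N(2,3) by (simp add: null_setsI)
  then have "AE t in L01. u t = v t"
    by (rule AE_not_in[THEN AE_mp]) (simp add: v_def)
  ultimately show ?thesis unfolding MA_def using u by blast
qed

text \<open>Closure of M(A) is contained in M(closure A): approximate \<open>u\<close> within
  \<open>(1/2)^k\<close> by \<open>A\<close>-valued maps, which then converge to \<open>u\<close> almost everywhere.\<close>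

lemma mtop_closure_of_MA_subset:
  fixes A :: "'a::{metric_space, second_countable_topology} set"
  shows "mtop closure_of MA A \<subseteq> MA (closure A)"
proof
  fix u assume "u \<in> mtop closure_of MA A"
  then have uM: "u \<in> Meas" and near: "\<And>e. e > 0 \<Longrightarrow> \<exists>y\<in>MA A. dist_M u y < e"
    unfolding in_mtop_closure_of[OF MA_subset_Meas] by auto
  have "\<exists>w. w \<in> Meas \<and> (\<forall>t\<in>{0..1}. w t \<in> A) \<and> dist_M u w \<le> (1/2)^k" for k
  proof -
    obtain y where y: "y \<in> MA A" "dist_M u y < (1/2)^k" using near[of "(1/2)^k"] by auto
    then obtain v where v: "v \<in> Meas" "\<forall>t\<in>{0..1}. v t \<in> A" "AE t in L01. y t = v t"
      unfolding MA_def by blast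
    have "dist_M u v = dist_M u y"
      using dist_M_AE_cong[OF uM subsetD[OF MA_subset_Meas y(1)] v(1) v(3)] by simp
    then show ?thesis using v y(2) by (intro exI[of _ v]) auto
  qed
  then obtain w where w: "\<And>k. w k \<in> Meas" "\<And>k. \<forall>t\<in>{0..1}. w k t \<in> A"
    "\<And>k. dist_M u (w k) \<le> (1/2)^k" by metis
  have "AE t in L01. (\<lambda>k. w k t) \<longlonglongrightarrow> u t"
    by (rule AE_tendsto_if_dist_M_summable[OF uM w(1) w(3)]) simp
  then have "AE t in L01. u t \<in> closure A"
  proof (rule AE_mp[OF _ AE_I2], intro impI)
    fix t assume "t \<in> space L01" "(\<lambda>k. w k t) \<longlonglongrightarrow> u t"
    then show "u t \<in> closure A"
      unfolding closure_sequential using w(2) by (intro exI[of _ "\<lambda>k. w k t"]) auto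
  qed
  moreover have "w 0 0 \<in> closure A" using w(2)[of 0] closure_subset by fastforce
  ultimately show "u \<in> MA (closure A)" using MA_if_AE[OF uM] by blast
qed

text \<open>A second countable metric space has a countable subset of \<open>A\<close> that
  approximates every point of \<open>closure A\<close>: pick a point of \<open>A\<close> in every basic
  open set meeting \<open>A\<close>.\<close>

lemma countable_dense_subset:
  fixes A :: "'a::{metric_space, second_countable_topology} set"
  obtains D where "countable D" "D \<subseteq> A"
    "\<And>x \<delta>. x \<in> closure A \<Longrightarrow> \<delta> > 0 \<Longrightarrow> \<exists>d\<in>D. dist x d < \<delta>"
proof -
  obtain \<B> :: "'a set set" where \<B>: "countable \<B>" "topological_basis \<B>"
    using ex_countable_basis by blast
  define D where "D = (\<lambda>b. SOME x. x \<in> b \<inter> A) ` {b\<in>\<B>. b \<inter> A \<noteq> {}}"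
  have "countable D" unfolding D_def using \<B>(1) by auto
  moreover have "D \<subseteq> A" unfolding D_def by (auto intro: someI2_ex)
  moreover have "\<exists>d\<in>D. dist x d < \<delta>" if x: "x \<in> closure A" "\<delta> > 0" for x \<delta>
  proof -
    obtain b where b: "b \<in> \<B>" "x \<in> b" "b \<subseteq> ball x \<delta>"
      using topological_basisE[OF \<B>(2) open_ball] x(2) by (metis centre_in_ball)
    have "b \<inter> A \<noteq> {}"
      using open_Int_closure_eq_empty[OF topological_basis_open[OF \<B>(2) b(1)]] b(2) x(1)
      by blast
    then have "(SOME y. y \<in> b \<inter> A) \<in> b \<inter> A"
      using someI_ex[of "\<lambda>y. y \<in> b \<inter> A"] by blast
    moreover have "(SOME y. y \<in> b \<inter> A) \<in> D"
      unfolding D_def using b(1) \<open>b \<inter> A \<noteq> {}\<close> by auto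
    ultimately show ?thesis using b(3) unfolding subset_iff mem_ball by blast
  qed
  ultimately show ?thesis using that by blast
qed

text \<open>Every measurable \<open>closure A\<close>-valued map is uniformly \<open>\<delta>\<close>-close to a measurable
  \<open>A\<close>-valued one: send \<open>t\<close> to the first point of an enumeration of a countable
  approximating subset of \<open>A\<close> that lies within \<open>\<delta>\<close> of \<open>v t\<close>.\<close>

lemma uniform_approximation_in_dense:
  fixes A :: "'a::{metric_space, second_countable_topology} set"
  assumes v: "v \<in> Meas" "\<forall>t\<in>{0..1}. v t \<in> closure A" and "\<delta> > 0"
  obtains w where "w \<in> Meas" "\<And>t. w t \<in> A" "\<And>t. t \<in> {0..1} \<Longrightarrow> dist (v t) (w t) < \<delta>"
proof -
  obtain D where D: "countable D" "D \<subseteq> A"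
    "\<And>x \<delta>. x \<in> closure A \<Longrightarrow> \<delta> > 0 \<Longrightarrow> \<exists>d\<in>D. dist x d < \<delta>"
    using countable_dense_subset by blast
  have "D \<noteq> {}" using D(3)[OF v(2)[rule_format, of 0], of 1] by auto
  define s where "s = from_nat_into D"
  have s: "range s = D" unfolding s_def using D(1) \<open>D \<noteq> {}\<close> by (simp add: range_from_nat_into)
  define idx where "idx t = (LEAST k. dist (v t) (s k) < \<delta>)" for t
  define w where "w t = s (idx t)" for t
  have [measurable]: "v \<in> borel_measurable L01" using v(1) by (simp add: Meas_def)
  have "idx \<in> measurable L01 (count_space UNIV)" unfolding idx_def by measurable
  then have "w \<in> Meas" unfolding Meas_def w_def
    by (simp add: measurable_compose[where f=idx and g=s, unfolded comp_def])
  moreover have "w t \<in> A" for t unfolding w_def using s D(2) by auto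
  moreover have "dist (v t) (w t) < \<delta>" if t: "t \<in> {0..1}" for t
  proof -
    obtain d where "d \<in> D" "dist (v t) d < \<delta>" using D(3)[OF v(2)[rule_format, OF t] \<open>\<delta> > 0\<close>] by blast
    then obtain k where "dist (v t) (s k) < \<delta>" using s by auto
    then show ?thesis unfolding w_def idx_def by (rule LeastI)
  qed
  ultimately show ?thesis using that by blast
qed

lemma MA_closure_subset_mtop_closure_of:
  fixes A :: "'a::{metric_space, second_countable_topology} set"
  shows "MA (closure A) \<subseteq> mtop closure_of MA A"
proof
  fix u assume "u \<in> MA (closure A)"
  then obtain v where uM: "u \<in> Meas" and v: "v \<in> Meas" "\<forall>t\<in>{0..1}. v t \<in> closure A"
    "AE t in L01. u t = v t" unfolding MA_def by blast
  have "\<exists>w\<in>MA A. dist_M u w < e" if "e > 0" for e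
  proof -
    obtain w where w: "w \<in> Meas" "\<And>t. w t \<in> A" "\<And>t. t \<in> {0..1} \<Longrightarrow> dist (v t) (w t) < e / 2"
      using uniform_approximation_in_dense[OF v(1,2), of "e / 2"] \<open>e > 0\<close> by auto
    have "dist_M u w = dist_M w v"
      using dist_M_AE_cong[OF w(1) uM v(1) v(3)] by (simp add: dist_M_sym)
    also have "\<dots> \<le> integral\<^sup>L L01 (\<lambda>t. e / 2)"
    proof (rule dist_M_le_integral[OF w(1) v(1)])
      fix t :: real assume "t \<in> {0..1}"
      then show "min (dist (w t) (v t)) 1 \<le> e / 2"
        using w(3) by (metis dist_commute min.cobounded1 order.trans less_imp_le)
    qed simp
    also have "\<dots> = e / 2" using measure_space_L01 by simp
    finally have "dist_M u w < e" using \<open>e > 0\<close> by simp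
    moreover have "w \<in> MA A"
      unfolding MA_def using w(1,2) AE_I2[of L01 "\<lambda>t. w t = w t"] by blast
    ultimately show ?thesis by blast
  qed
  with uM show "u \<in> mtop closure_of MA A" unfolding in_mtop_closure_of[OF MA_subset_Meas] by blast
qed

lemma Phi_uniform_convergence:
  fixes a :: "'a::{metric_space, second_countable_topology}"
  assumes "e > 0"
  obtains N where "N \<ge> 1" "\<And>n u. n \<ge> N \<Longrightarrow> u \<in> Meas \<Longrightarrow> dist_M (Phi n a u) u < e"
proof -
  obtain N :: nat where N: "N > 0" "inverse (real N) < e"
    using ex_inverse_of_nat_less assms by blast
  have "dist_M (Phi n a u) u < e" if "n \<ge> N" "u \<in> Meas" for n u
  proof -
    have "dist_M (Phi n a u) u \<le> 1 / real n" using Phi_close[OF that(2)] .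
    also have "\<dots> \<le> 1 / real N" using that(1) N(1) by (simp add: frac_le)
    finally show ?thesis using N(2) by (simp add: divide_inverse)
  qed
  then show ?thesis using N(1) by (intro that[of N]) auto
qed

theorem mainTheorem5:
  fixes A :: "'a::{metric_space, second_countable_topology} set"
  assumes "A \<noteq> UNIV"
  shows "type_Z (MA A)
    \<and> (\<forall>a. a \<notin> A \<longrightarrow>
          (\<forall>n\<ge>1. \<forall>u\<in>Meas. Phi n a u \<in> Meas \<and> Phi n a u \<notin> MA A)
        \<and> (\<forall>K. compactin mtop K \<longrightarrow>
              (\<forall>e>0. \<exists>N. \<forall>n\<ge>N. \<forall>u\<in>K. dist_M (Phi n a u) u < e)))
    \<and> mtop closure_of (MA A) = MA (closure A)"
proof (intro conjI allI impI)
  obtain a where a: "a \<notin> A" using assms by auto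
  show "type_Z (MA A)"
  proof (rule type_Z_if_uniform_avoiding_maps)
    fix e :: real assume "e > 0"
    then obtain N where N: "N \<ge> 1" "\<And>n u. n \<ge> N \<Longrightarrow> u \<in> Meas \<Longrightarrow> dist_M (Phi n a u) u < e"
      using Phi_uniform_convergence[OF \<open>e > 0\<close>, of a] by blast
    have "continuous_map mtop mtop (Phi N a)"
      by (rule nonexpansive_continuous_map) (auto intro: Phi_Meas Phi_nonexpansive)
    then show "\<exists>h. continuous_map mtop mtop h \<and> h ` Meas \<inter> MA A = {} \<and>
                   (\<forall>u\<in>Meas. dist_M u (h u) < e)"
      using Phi_notin_MA[OF N(1) a] N(2) by (intro exI[of _ "Phi N a"]) (auto simp: dist_M_sym)
  qed
next
  fix a :: 'a and n :: nat assume "a \<notin> A" "n \<ge> 1"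
  then show "\<forall>u\<in>Meas. Phi n a u \<in> Meas \<and> Phi n a u \<notin> MA A"
    using Phi_Meas Phi_notin_MA by blast
next
  fix a :: 'a and K :: "(real \<Rightarrow> 'a) set" and e :: real assume "compactin mtop K" "e > 0"
  then have "K \<subseteq> Meas" using compactin_subset_topspace topspace_mtop by metis
  moreover obtain N where "\<And>n u. n \<ge> N \<Longrightarrow> u \<in> Meas \<Longrightarrow> dist_M (Phi n a u) u < e"
    using Phi_uniform_convergence[OF \<open>e > 0\<close>, of a] by blast
  ultimately show "\<exists>N. \<forall>n\<ge>N. \<forall>u\<in>K. dist_M (Phi n a u) u < e" by blast
next
  show "mtop closure_of MA A = MA (closure A)"
    using mtop_closure_of_MA_subset MA_closure_subset_mtop_closure_of by blast
qed

end
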